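(* For every positive integer $n$ and every string $u$ of length $n$ over a finite alphabet, the sum of the exponents of all runs in $u$ is less than $4.1\,n$.
   Context: For a word $u=u_1\cdots u_m$, the (shortest) period is the smallest positive integer $p$ with $u_i=u_{i+p}$ for all $1\le i\le m-p$; $u[i..j]=u_i\cdots u_j$. A run in $u$ is an interval $[i..j]$ such that the period $p$ of $u[i..j]$ satisfies $2p\le j-i+1$, and $u[i-1]\ne u[i+p-1]$ (or $i=1$) and $u[j-p+1]\ne u[j+1]$ (or $j=|u|$). Its exponent is $(j-i+1)/p$. *)

theory Defs
  imports Complex_Main
begin

(* Words are lists; the paper's 1-indexed letter u_i is  u ! (i - 1). *)

definition is_period :: "'a list \<Rightarrow> nat \<Rightarrow> bool" where
  "is_period w p \<longleftrightarrow> 0 < p \<and> (\<forall>k. k + p < length w \<longrightarrow> w ! k = w ! (k + p))"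

(* shortest period (for nonempty w, p = |w| is always a period) *)
definition period :: "'a list \<Rightarrow> nat" where
  "period w = (LEAST p. is_period w p)"

(* the factor u[i..j] = u_i ... u_j, 1-indexed *)
definition factor :: "'a list \<Rightarrow> nat \<Rightarrow> nat \<Rightarrow> 'a list" where
  "factor u i j = take (j + 1 - i) (drop (i - 1) u)"

definition letter :: "'a list \<Rightarrow> nat \<Rightarrow> 'a" where
  "letter u i = u ! (i - 1)"

definition is_run :: "'a list \<Rightarrow> nat \<Rightarrow> nat \<Rightarrow> bool" where
  "is_run u i j \<longleftrightarrow>
     1 \<le> i \<and> i \<le> j \<and> j \<le> length u \<and>
     (let p = period (factor u i j) in
        2 * p \<le> j - i + 1 \<and>
        (i = 1 \<or> letter u (i - 1) \<noteq> letter u (i + p - 1)) \<and>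
        (j = length u \<or> letter u (j - p + 1) \<noteq> letter u (j + 1)))"

definition runs :: "'a list \<Rightarrow> (nat \<times> nat) set" where
  "runs u = {(i, j). is_run u i j}"

definition run_exponent :: "'a list \<Rightarrow> nat \<times> nat \<Rightarrow> real" where
  "run_exponent u r = real (snd r - fst r + 1) / real (period (factor u (fst r) (snd r)))"

end

theory Submission
  imports Defs "HOL-Library.List_Lexorder"
begin

text \<open>Fix a linear order on the alphabet. For a run with period \<open>p\<close> use whichever of the
  order and its reverse makes the letter following the run smaller than the letter \<open>p\<close>
  positions before it, and call a position \<open>s\<close> inside the run, other than its first one, a
  Lyndon root if the length-\<open>p\<close> factor starting at \<open>s\<close> is a Lyndon word for that order.
  A minimal rotation of the period is a Lyndon word, so a run of exponent \<open>e\<close> has at least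
  \<open>\<lfloor>e\<rfloor> - 1 \<ge> e / 3\<close> Lyndon roots. Distinct runs have disjoint sets of Lyndon roots: the
  period is recovered from the root (the last letter of a Lyndon word exceeds the first, and a
  Lyndon word starting in a run cannot outgrow its period), and a run is determined by its period
  and any \<open>p\<close> consecutive positions in it. Hence the exponents of the runs of a word of length
  \<open>n\<close> sum to at most \<open>3 (n - 1)\<close>.\<close>

section \<open>Lyndon words\<close>

definition segment :: "(nat \<Rightarrow> 'b) \<Rightarrow> nat \<Rightarrow> nat \<Rightarrow> 'b list" where
  "segment w i l = map (\<lambda>t. w (i + t)) [0..<l]"

lemma length_segment [simp]: "length (segment w i l) = l"
  by (simp add: segment_def)

lemma nth_segment [simp]: "t < l \<Longrightarrow> segment w i l ! t = w (i + t)"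
  by (simp add: segment_def)

lemma segment_eq_Nil_iff [simp]: "segment w i l = [] \<longleftrightarrow> l = 0"
  by (simp add: segment_def)

lemma take_segment: "take k (segment w i l) = segment w i (min k l)"
  by (rule nth_equalityI) auto

lemma drop_segment: "drop k (segment w i l) = segment w (i + k) (l - k)"
  by (rule nth_equalityI) (auto simp: add.assoc)

lemma segment_eq_iff: "segment w i l = segment v j l \<longleftrightarrow> (\<forall>t<l. w (i + t) = v (j + t))"
  by (auto simp: list_eq_iff_nth_eq)

lemma segment_less_iff:
  "segment w i l < segment v j m \<longleftrightarrow>
     l < m \<and> (\<forall>t<l. w (i + t) = v (j + t)) \<or>
     (\<exists>d<min l m. (\<forall>t<d. w (i + t) = v (j + t)) \<and> w (i + d) < v (j + d))"
  unfolding list_less_def lexord_take_index_conv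
  by (auto simp: take_segment segment_eq_iff min_def)

definition lyndon :: "'b::linorder list \<Rightarrow> bool" where
  "lyndon x \<longleftrightarrow> x \<noteq> [] \<and> (\<forall>k. 0 < k \<and> k < length x \<longrightarrow> x < drop k x)"

lemma lyndon_segment_iff:
  "lyndon (segment w i l) \<longleftrightarrow> 0 < l \<and> (\<forall>k. 0 < k \<and> k < l \<longrightarrow> segment w i l < segment w (i + k) (l - k))"
  unfolding lyndon_def by (auto simp: drop_segment)

lemma lyndon_first_less_last:
  assumes "lyndon x" "2 \<le> length x"
  shows "x ! 0 < x ! (length x - 1)"
proof -
  have "x < drop (length x - 1) x"
    using assms unfolding lyndon_def by simp
  moreover have "drop (length x - 1) x = [x ! (length x - 1)]"
    using assms(2) Cons_nth_drop_Suc[of "length x - 1" x] by simp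
  moreover obtain y ys where "x = y # ys"
    using assms(2) by (cases x) auto
  ultimately show ?thesis
    by simp
qed

lemma lyndon_first_increase:
  assumes "lyndon x" "2 \<le> length x"
  obtains k where "0 < k" "k < length x" "\<forall>t<k. x ! t = x ! 0" "x ! 0 < x ! k"
proof -
  have "\<exists>t<length x. x ! t \<noteq> x ! 0"
  proof (rule ccontr)
    obtain c where c: "x ! 0 = c"
      by simp
    assume "\<not> ?thesis"
    then have "\<forall>t<length x. x ! t = c"
      using c by blast
    then have "x = replicate (length x) c"
      by (intro nth_equalityI) auto
    moreover have "x < drop 1 x"
      using assms unfolding lyndon_def by simp
    moreover have "\<not> replicate m c < drop 1 (replicate m c)" for m
    proof -
      have "\<not> replicate (Suc k) c < replicate k c" for k
        by (induction k) auto
      then show ?thesis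
        by (cases m) auto
    qed
    ultimately show False
      by metis
  qed
  then obtain k where k: "k < length x" "x ! k \<noteq> x ! 0"
    and before: "\<forall>t<k. \<not> (t < length x \<and> x ! t \<noteq> x ! 0)"
    using exists_least_iff[where P = "\<lambda>t. t < length x \<and> x ! t \<noteq> x ! 0"] by blast
  have "x \<noteq> []"
    using k(1) by auto
  have "0 < k"
    using k(2) by (cases k) simp_all
  then have "x < drop k x"
    using assms(1) k(1) unfolding lyndon_def by simp
  moreover have "x = x ! 0 # drop 1 x" "drop k x = x ! k # drop (Suc k) x"
    using Cons_nth_drop_Suc[of 0 x] Cons_nth_drop_Suc[of k x] k(1) \<open>x \<noteq> []\<close>
    by (simp_all add: eq_commute)
  ultimately have "x ! 0 < x ! k"
    using k(2) by (metis Cons_less_Cons)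
  moreover have "\<forall>t<k. x ! t = x ! 0"
    using before k(1) by (meson order.strict_trans)
  ultimately show thesis
    using that \<open>0 < k\<close> k(1) by blast
qed

section \<open>Periodic windows\<close>

definition has_period_on :: "(nat \<Rightarrow> 'b) \<Rightarrow> nat \<Rightarrow> nat \<Rightarrow> nat \<Rightarrow> bool" where
  "has_period_on w a L p \<longleftrightarrow> (\<forall>q. a \<le> q \<and> q + p < a + L \<longrightarrow> w q = w (q + p))"

lemma has_period_on_mult:
  assumes "has_period_on w a L p" "a \<le> q" "q + k * p < a + L"
  shows "w q = w (q + k * p)"
  using assms(3)
proof (induction k)
  case (Suc k)
  then have "w q = w (q + k * p)"
    by simp
  also have "\<dots> = w (q + k * p + p)"
    using Suc.prems assms(1,2) unfolding has_period_on_def by (simp add: add.assoc)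
  finally show ?case
    by (simp add: algebra_simps)
qed simp

lemma has_period_on_extension:
  assumes "has_period_on w a L p" "a \<le> q" "q < a + L"
  shows "w q = w (a + (q - a) mod p)"
proof -
  have q: "a + (q - a) mod p + (q - a) div p * p = q"
    using assms(2) by simp
  have "w (a + (q - a) mod p) = w (a + (q - a) mod p + (q - a) div p * p)"
    by (rule has_period_on_mult[OF assms(1)]) (use q assms(3) in auto)
  then show ?thesis
    by (simp only: q)
qed

definition descends_at_end :: "(nat \<Rightarrow> 'b::linorder) \<Rightarrow> nat \<Rightarrow> nat \<Rightarrow> nat \<Rightarrow> nat \<Rightarrow> bool" where
  "descends_at_end w n a L p \<longleftrightarrow> a + L = n \<or> w (a + L) < w (a + L - p)"

text \<open>A Lyndon word starting inside a run of period \<open>p\<close> agrees with its suffix at distance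
  \<open>p\<close> up to the end of the run; if the run descends at its end, that suffix is the smaller
  one as soon as the word is longer than \<open>p\<close>.\<close>

lemma lyndon_segment_length_le_period:
  fixes w :: "nat \<Rightarrow> 'b::linorder"
  assumes per: "has_period_on w a L p" and "0 < p" "a \<le> i" "i + p \<le> a + L"
    and descends: "descends_at_end w n a L p"
    and lyndon: "lyndon (segment w i l)" and "i + l \<le> n"
  shows "l \<le> p"
proof (rule ccontr)
  assume "\<not> l \<le> p"
  then have "segment w i l < segment w (i + p) (l - p)"
    using lyndon \<open>0 < p\<close> unfolding lyndon_segment_iff by simp
  then obtain d where d: "d < l - p" "\<forall>t<d. w (i + t) = w (i + p + t)" "w (i + d) < w (i + p + d)"
    unfolding segment_less_iff by auto
  show False
  proof (cases "i + p + d < a + L")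
    case True
    then have "w (i + d) = w (i + d + p)"
      using per \<open>a \<le> i\<close> unfolding has_period_on_def by auto
    then show False
      using d(3) by (simp add: add.commute add.left_commute)
  next
    case False
    define e where "e = a + L - (i + p)"
    have e: "e \<le> d" "i + p + e = a + L"
      using False assms(4) by (auto simp: e_def)
    then have "a + L < n"
      using d(1) \<open>i + l \<le> n\<close> by linarith
    then have after: "w (a + L) < w (a + L - p)"
      using descends by (simp add: descends_at_end_def)
    have "a + L - p = i + e"
      using e(2) by simp
    then have "w (a + L - p) = w (i + e)"
      by simp
    also have "\<dots> \<le> w (i + p + e)"
      using d(2,3) e(1) by (cases "e = d") auto
    also have "\<dots> = w (a + L)"
      by (simp only: e(2))
    finally show False
      using after by (meson leD)
  qed
qed

section \<open>Lyndon roots\<close>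

lemma rotation_eq_imp_shift_invariant:
  assumes "0 < p" and periodic: "\<And>x y. x mod p = y mod p \<Longrightarrow> c x = c y"
    and "segment c (d + k) p = segment c d p"
  shows "c (x + k) = c x"
proof -
  define t where "t = (x + (p - 1) * d) mod p"
  have "t < p"
    using \<open>0 < p\<close> by (simp add: t_def)
  have "(d + t) mod p = (x + ((p - 1) * d + d)) mod p"
    by (simp add: t_def mod_add_right_eq algebra_simps)
  also have "(p - 1) * d + d = d * p"
    using \<open>0 < p\<close> by (simp add: algebra_simps)
  finally have dt: "(d + t) mod p = x mod p"
    by simp
  then have "(d + k + t) mod p = (x + k) mod p"
    by (metis add.commute add.left_commute mod_add_left_eq)
  then have "c (x + k) = c (d + k + t)"
    by (intro periodic) simp
  also have "\<dots> = c (d + t)"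
    using assms(3) \<open>t < p\<close> unfolding segment_eq_iff by simp
  also have "\<dots> = c x"
    using dt by (intro periodic) simp
  finally show ?thesis .
qed

lemma lyndon_minimal_rotation:
  fixes c :: "nat \<Rightarrow> 'b::linorder"
  assumes "0 < p" and periodic: "\<And>x y. x mod p = y mod p \<Longrightarrow> c x = c y"
    and minimal: "\<And>k. 0 < k \<Longrightarrow> k < p \<Longrightarrow> segment c d p < segment c (d + k) p"
  shows "lyndon (segment c d p)"
  unfolding lyndon_segment_iff
proof (intro conjI allI impI)
  show "0 < p" by fact
  fix k assume k: "0 < k \<and> k < p"
  then obtain e where e: "e < p" "\<forall>t<e. c (d + t) = c (d + k + t)" "c (d + e) < c (d + k + e)"
    using minimal[of k] unfolding segment_less_iff by auto
  show "segment c d p < segment c (d + k) (p - k)"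
  proof (cases "e < p - k")
    case True
    then show ?thesis
      unfolding segment_less_iff using e(2,3) by auto
  next
    case False
    \<comment> \<open>then the rotation starting at \<open>d + (p - k)\<close> is smaller than the one at \<open>d\<close>\<close>
    have wrap: "c (d + k + (p - k + t)) = c (d + t)" for t
    proof -
      have "d + k + (p - k + t) = d + t + p"
        using k by simp
      then show ?thesis
        by (intro periodic) (simp only: mod_add_self2)
    qed
    have "segment c (d + (p - k)) p < segment c d p"
      unfolding segment_less_iff
    proof (intro disjI2 exI conjI allI impI)
      show "e - (p - k) < min p p"
        using e(1) by simp
      fix t assume "t < e - (p - k)"
      then have "c (d + (p - k + t)) = c (d + k + (p - k + t))"
        using e(2) by simp
      then show "c (d + (p - k) + t) = c (d + t)"
        using wrap[of t] by (simp add: add.assoc)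
    next
      have "c (d + (p - k + (e - (p - k)))) < c (d + k + (p - k + (e - (p - k))))"
        using e(3) False by simp
      then show "c (d + (p - k) + (e - (p - k))) < c (d + (e - (p - k)))"
        using wrap[of "e - (p - k)"] by (simp add: add.assoc)
    qed
    moreover have "segment c d p < segment c (d + (p - k)) p"
      using k by (intro minimal) auto
    ultimately show ?thesis
      by (meson less_asym)
  qed
qed

lemma exists_lyndon_rotation:
  fixes c :: "nat \<Rightarrow> 'b::linorder"
  assumes "0 < p" and periodic: "\<And>x y. x mod p = y mod p \<Longrightarrow> c x = c y"
    and primitive: "\<And>k. 0 < k \<Longrightarrow> k < p \<Longrightarrow> \<exists>x. c (x + k) \<noteq> c x"
  obtains d where "d \<in> {1..p}" "lyndon (segment c d p)"
proof -
  define R where "R d = segment c d p" for d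
  obtain d0 where d0: "d0 \<in> {1..p}" "\<forall>d\<in>{1..p}. R d0 \<le> R d"
  proof -
    have "Min (R ` {1..p}) \<in> R ` {1..p}"
      using \<open>0 < p\<close> by (intro Min_in) auto
    then show thesis
      using that by (metis (no_types, lifting) Min_le finite_atLeastAtMost finite_imageI image_iff)
  qed
  have R_min: "R d0 \<le> R d" for d
  proof -
    define e where "e = (if d mod p = 0 then p else d mod p)"
    have "e \<in> {1..p}" "d mod p = e mod p"
      using \<open>0 < p\<close> by (auto simp: e_def)
    then have "R d = R e"
      unfolding R_def segment_eq_iff by (metis periodic mod_add_left_eq)
    then show ?thesis
      using d0(2) \<open>e \<in> {1..p}\<close> by simp
  qed
  have "lyndon (segment c d0 p)"
  proof (rule lyndon_minimal_rotation[OF \<open>0 < p\<close> periodic])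
    fix k assume k: "0 < k" "k < p"
    have "R (d0 + k) \<noteq> R d0"
      using rotation_eq_imp_shift_invariant[where c = c and d = d0 and k = k, OF \<open>0 < p\<close> periodic] primitive[OF k]
      unfolding R_def by blast
    then show "segment c d0 p < segment c (d0 + k) p"
      using R_min[of "d0 + k"] unfolding R_def by auto
  qed
  then show thesis
    using that d0(1) by blast
qed

lemma exists_lyndon_root:
  fixes w :: "nat \<Rightarrow> 'b::linorder"
  assumes per: "has_period_on w a L p" and "0 < p" "2 * p \<le> L"
    and primitive: "\<And>k. 0 < k \<Longrightarrow> k < p \<Longrightarrow> \<not> has_period_on w a L k"
  obtains s where "a < s" "s \<le> a + p" "lyndon (segment w s p)"
proof -
  define c where "c t = w (a + t mod p)" for t
  have periodic: "c x = c y" if "x mod p = y mod p" for x y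
    using that by (simp add: c_def)
  have window: "w q = c (q - a)" if "a \<le> q" "q < a + L" for q
    using has_period_on_extension[OF per that] by (simp add: c_def)
  have aperiodic: "\<exists>x. c (x + k) \<noteq> c x" if "0 < k" "k < p" for k
  proof (rule ccontr)
    assume "\<not> (\<exists>x. c (x + k) \<noteq> c x)"
    then have shift: "c (x + k) = c x" for x
      by blast
    have "has_period_on w a L k"
      unfolding has_period_on_def
    proof (intro allI impI)
      fix q assume q: "a \<le> q \<and> q + k < a + L"
      then have "w q = c (q - a)"
        by (intro window) auto
      also have "\<dots> = c (q - a + k)"
        by (rule shift[symmetric])
      also have "q - a + k = q + k - a"
        using q by simp
      also have "c (q + k - a) = w (q + k)"
        using q by (intro window[symmetric]) auto
      finally show "w q = w (q + k)" .
    qed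
    then show False
      using primitive that by blast
  qed
  then obtain d where d: "d \<in> {1..p}" "lyndon (segment c d p)"
    using exists_lyndon_rotation[OF \<open>0 < p\<close> periodic aperiodic] by blast
  moreover have "segment w (a + d) p = segment c d p"
    unfolding segment_eq_iff using d(1) \<open>2 * p \<le> L\<close> by (simp add: window)
  ultimately show thesis
    using that[of "a + d"] by simp
qed

text \<open>Roots starting at the first position of the run are excluded, so that the letter
  preceding a root always lies in the run.\<close>

definition lyndon_roots :: "(nat \<Rightarrow> 'b::linorder) \<Rightarrow> nat \<Rightarrow> nat \<Rightarrow> nat \<Rightarrow> nat set" where
  "lyndon_roots w a L p = {s. a < s \<and> s + p \<le> a + L \<and> lyndon (segment w s p)}"

lemma lyndon_roots_subset: "0 < p \<Longrightarrow> lyndon_roots w a L p \<subseteq> {a <..< a + L}"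
  by (auto simp: lyndon_roots_def)

lemma card_lyndon_roots_ge:
  fixes w :: "nat \<Rightarrow> 'b::linorder"
  assumes per: "has_period_on w a L p" and "0 < p" "2 * p \<le> L"
    and primitive: "\<And>k. 0 < k \<Longrightarrow> k < p \<Longrightarrow> \<not> has_period_on w a L k"
  shows "L div p - 1 \<le> card (lyndon_roots w a L p)"
proof -
  obtain s where s: "a < s" "s \<le> a + p" "lyndon (segment w s p)"
    using exists_lyndon_root[OF per \<open>0 < p\<close> \<open>2 * p \<le> L\<close> primitive] .
  define m where "m = L div p"
  have "m * p \<le> L"
    unfolding m_def by (rule div_times_less_eq_dividend)
  have "s + k * p \<in> lyndon_roots w a L p" if "k < m - 1" for k
  proof -
    have "(k + 2) * p \<le> m * p"
      using that by (intro mult_right_mono) auto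
    then have fits: "s + k * p + p \<le> a + L"
      using s(2) \<open>m * p \<le> L\<close> by (simp add: algebra_simps)
    have "segment w (s + k * p) p = segment w s p"
      unfolding segment_eq_iff
    proof (intro allI impI)
      fix t assume "t < p"
      then have "w (s + t) = w (s + t + k * p)"
        using s(1) fits by (intro has_period_on_mult[OF per]) auto
      then show "w (s + k * p + t) = w (s + t)"
        by (simp add: algebra_simps)
    qed
    then show ?thesis
      using s fits unfolding lyndon_roots_def by simp
  qed
  then have "(\<lambda>k. s + k * p) ` {..<m - 1} \<subseteq> lyndon_roots w a L p"
    by auto
  moreover have "inj_on (\<lambda>k. s + k * p) {..<m - 1}"
    using \<open>0 < p\<close> by (auto simp: inj_on_def)
  moreover have "finite (lyndon_roots w a L p)"
    by (rule finite_subset[OF lyndon_roots_subset[OF \<open>0 < p\<close>]]) simp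
  ultimately show ?thesis
    unfolding m_def by (metis card_image card_lessThan card_mono)
qed

lemma exponent_le_three_card_lyndon_roots:
  fixes w :: "nat \<Rightarrow> 'b::linorder"
  assumes per: "has_period_on w a L p" and "0 < p" "2 * p \<le> L"
    and primitive: "\<And>k. 0 < k \<Longrightarrow> k < p \<Longrightarrow> \<not> has_period_on w a L k"
  shows "real L / real p \<le> 3 * real (card (lyndon_roots w a L p))"
proof -
  define m where "m = L div p"
  have "2 * p div p \<le> m"
    unfolding m_def using \<open>2 * p \<le> L\<close> by (rule div_le_mono)
  then have "2 \<le> m"
    using \<open>0 < p\<close> by simp
  have "L = m * p + L mod p" "L mod p < p"
    using \<open>0 < p\<close> by (simp_all add: m_def)
  then have "L < (m + 1) * p"
    by (simp add: algebra_simps)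
  then have "real L < (real m + 1) * real p"
    by (metis of_nat_1 of_nat_add of_nat_less_iff of_nat_mult)
  then have "real L / real p < real m + 1"
    using \<open>0 < p\<close> by (simp add: pos_divide_less_eq)
  also have "\<dots> \<le> 3 * (real m - 1)"
    using \<open>2 \<le> m\<close> by simp
  also have "\<dots> \<le> 3 * real (card (lyndon_roots w a L p))"
  proof -
    have "m \<le> card (lyndon_roots w a L p) + 1"
      using card_lyndon_roots_ge[OF per \<open>0 < p\<close> \<open>2 * p \<le> L\<close> primitive] by (simp add: m_def)
    then show ?thesis
      by simp
  qed
  finally show ?thesis
    by simp
qed

section \<open>Runs\<close>

definition run_window :: "(nat \<Rightarrow> 'b) \<Rightarrow> nat \<Rightarrow> nat \<Rightarrow> nat \<Rightarrow> nat \<Rightarrow> bool" where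
  "run_window w n a L p \<longleftrightarrow> 0 < p \<and> 2 * p \<le> L \<and> a + L \<le> n \<and> has_period_on w a L p \<and>
     (\<forall>k. 0 < k \<and> k < p \<longrightarrow> \<not> has_period_on w a L k) \<and>
     (a = 0 \<or> w (a - 1) \<noteq> w (a - 1 + p)) \<and> (a + L = n \<or> w (a + L - p) \<noteq> w (a + L))"

definition run_windows :: "(nat \<Rightarrow> 'b) \<Rightarrow> nat \<Rightarrow> (nat \<times> nat \<times> nat) set" where
  "run_windows w n = {(a, L, p). run_window w n a L p}"

lemma has_period_on_comp_inj: "inj f \<Longrightarrow> has_period_on (f \<circ> w) a L p \<longleftrightarrow> has_period_on w a L p"
  by (simp add: has_period_on_def inj_eq)

lemma run_window_comp_inj: "inj f \<Longrightarrow> run_window (f \<circ> w) n a L p \<longleftrightarrow> run_window w n a L p"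
  by (simp add: run_window_def has_period_on_comp_inj inj_eq)

lemma run_window_uminus:
  fixes w :: "nat \<Rightarrow> 'b::ab_group_add"
  shows "run_window (\<lambda>q. - w q) n a L p \<longleftrightarrow> run_window w n a L p"
  using run_window_comp_inj[of uminus w] by (simp add: comp_def)

lemma finite_run_windows: "finite (run_windows w n)"
proof (rule finite_subset)
  show "run_windows w n \<subseteq> {..n} \<times> {..n} \<times> {..n}"
    by (auto simp: run_windows_def run_window_def)
qed simp

lemma periodic_window_within_run:
  assumes R: "run_window w n a L p" and per: "has_period_on w a' L' p" and "a' + L' \<le> n"
    and s: "a \<le> s" "s + p \<le> a + L" "a' \<le> s" "s + p \<le> a' + L'"
  shows "a \<le> a'" "a' + L' \<le> a + L"
proof -
  have "0 < p"
    using R by (simp add: run_window_def)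
  show "a \<le> a'"
  proof (rule ccontr)
    assume "\<not> a \<le> a'"
    then have "a' \<le> a - 1" "a - 1 + p < a' + L'"
      using s \<open>0 < p\<close> by auto
    then have "w (a - 1) = w (a - 1 + p)"
      using per unfolding has_period_on_def by blast
    then show False
      using R \<open>\<not> a \<le> a'\<close> by (simp add: run_window_def)
  qed
  show "a' + L' \<le> a + L"
  proof (rule ccontr)
    assume "\<not> a' + L' \<le> a + L"
    then have "a' \<le> a + L - p" "a + L - p + p < a' + L'"
      using s by auto
    then have "w (a + L - p) = w (a + L - p + p)"
      using per unfolding has_period_on_def by blast
    then show False
      using R \<open>\<not> a' + L' \<le> a + L\<close> \<open>a' + L' \<le> n\<close> s(2) by (auto simp: run_window_def)
  qed
qed

lemma lyndon_root_period_eq_1_iff: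
  fixes w :: "nat \<Rightarrow> 'b::linorder"
  assumes per: "has_period_on w a L p" and "0 < p" and s: "s \<in> lyndon_roots w a L p"
  shows "p = 1 \<longleftrightarrow> w (s - 1) = w s"
proof -
  have "a < s" "s + p \<le> a + L" "lyndon (segment w s p)"
    using s by (simp_all add: lyndon_roots_def)
  then have "a \<le> s - 1" "s - 1 + p < a + L"
    by auto
  then have before: "w (s - 1) = w (s - 1 + p)"
    using per unfolding has_period_on_def by blast
  show ?thesis
  proof
    assume "p = 1"
    then show "w (s - 1) = w s"
      using before \<open>a < s\<close> by simp
  next
    assume eq: "w (s - 1) = w s"
    show "p = 1"
    proof (rule ccontr)
      assume "p \<noteq> 1"
      then have "2 \<le> p"
        using \<open>0 < p\<close> by simp
      then have "w s < w (s + (p - 1))"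
        using lyndon_first_less_last[OF \<open>lyndon (segment w s p)\<close>] by simp
      moreover have "s + (p - 1) = s - 1 + p"
        using \<open>a < s\<close> \<open>0 < p\<close> by simp
      ultimately show False
        using eq before by simp
    qed
  qed
qed

text \<open>The first letter differing from the initial one would have to be larger in both orders.\<close>

lemma lyndon_segments_opposite_orders:
  fixes w v :: "nat \<Rightarrow> 'b::linorder"
  assumes opposite: "\<And>q q'. v q < v q' \<longleftrightarrow> w q' < w q"
    and "lyndon (segment w s l)" "2 \<le> l" "lyndon (segment v s l')" "2 \<le> l'"
  shows False
proof -
  have eq_iff: "v q = v q' \<longleftrightarrow> w q = w q'" for q q'
    using opposite by (metis not_less_iff_gr_or_eq)
  have first_increase: "\<exists>k>0. (\<forall>t<k. f (s + t) = f s) \<and> f s < f (s + k)"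
    if lyndon: "lyndon (segment f s m)" and "2 \<le> m" for f :: "nat \<Rightarrow> 'b" and m
  proof -
    have "2 \<le> length (segment f s m)"
      using \<open>2 \<le> m\<close> by simp
    then obtain k where k: "0 < k" "k < m" "\<forall>t<k. segment f s m ! t = segment f s m ! 0"
      "segment f s m ! 0 < segment f s m ! k"
      using lyndon_first_increase[OF lyndon] by (metis length_segment)
    have "f (s + t) = f s" if "t < k" for t
    proof -
      have "segment f s m ! t = segment f s m ! 0"
        using k(3) that by blast
      then show ?thesis
        using that k(1,2) by simp
    qed
    then show ?thesis
      using k by auto
  qed
  obtain k where k: "0 < k" "\<forall>t<k. w (s + t) = w s" "w s < w (s + k)"
    using first_increase assms(2,3) by blast
  obtain k' where k': "0 < k'" "\<forall>t<k'. v (s + t) = v s" "v s < v (s + k')"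
    using first_increase assms(4,5) by blast
  show False
  proof (cases k k' rule: linorder_cases)
    case less
    then show False
      using k(3) k'(2) eq_iff by (metis less_irrefl)
  next
    case equal
    then show False
      using k(3) k'(3) opposite by (metis less_asym)
  next
    case greater
    then show False
      using k(2) k'(3) eq_iff by (metis less_irrefl)
  qed
qed

lemma lyndon_root_determines_period:
  fixes w v :: "nat \<Rightarrow> 'b::linordered_ab_group_add"
  assumes R: "run_window w n a L p" and R': "run_window v n a' L' p'"
    and v: "v = w \<or> v = (\<lambda>q. - w q)"
    and descends: "descends_at_end w n a L p" "descends_at_end v n a' L' p'"
    and s: "s \<in> lyndon_roots w a L p" "s \<in> lyndon_roots v a' L' p'"
  shows "p = p'"
proof -
  have "p = 1 \<longleftrightarrow> w (s - 1) = w s"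
    using R by (intro lyndon_root_period_eq_1_iff[OF _ _ s(1)]) (simp_all add: run_window_def)
  moreover have "p' = 1 \<longleftrightarrow> v (s - 1) = v s"
    using R' by (intro lyndon_root_period_eq_1_iff[OF _ _ s(2)]) (simp_all add: run_window_def)
  moreover have "v (s - 1) = v s \<longleftrightarrow> w (s - 1) = w s"
    using v by auto
  ultimately have one_iff: "p = 1 \<longleftrightarrow> p' = 1"
    by simp
  have roots: "s + p \<le> a + L" "lyndon (segment w s p)" "s + p' \<le> a' + L'" "lyndon (segment v s p')"
    using s by (simp_all add: lyndon_roots_def)
  have le: "a < s" "a' < s" "0 < p" "0 < p'" "a + L \<le> n" "a' + L' \<le> n"
    using s R R' by (simp_all add: lyndon_roots_def run_window_def)
  show "p = p'"
  proof (cases "p = 1")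
    case False
    then have "2 \<le> p" "2 \<le> p'"
      using one_iff le by auto
    from v show ?thesis
    proof
      assume "v = w"
      have "p' \<le> p"
        using R descends(1) roots le unfolding run_window_def \<open>v = w\<close>
        by (intro lyndon_segment_length_le_period[of w a L p s n p']) auto
      moreover have "p \<le> p'"
        using R' descends(2) roots le unfolding run_window_def \<open>v = w\<close>
        by (intro lyndon_segment_length_le_period[of w a' L' p' s n p]) auto
      ultimately show ?thesis
        by simp
    next
      assume "v = (\<lambda>q. - w q)"
      then have "v q < v q' \<longleftrightarrow> w q' < w q" for q q'
        by simp
      from lyndon_segments_opposite_orders[OF this roots(2) \<open>2 \<le> p\<close> roots(4) \<open>2 \<le> p'\<close>]
      show ?thesis ..
    qed
  qed (use one_iff in simp)
qed

lemma lyndon_roots_disjoint: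
  fixes w v :: "nat \<Rightarrow> 'b::linordered_ab_group_add"
  assumes R: "run_window w n a L p" and R': "run_window v n a' L' p'"
    and v: "v = w \<or> v = (\<lambda>q. - w q)"
    and descends: "descends_at_end w n a L p" "descends_at_end v n a' L' p'"
    and s: "s \<in> lyndon_roots w a L p" "s \<in> lyndon_roots v a' L' p'"
  shows "(a, L, p) = (a', L', p')"
proof -
  have "p = p'"
    using lyndon_root_determines_period[OF assms] .
  have R'_w: "run_window w n a' L' p"
    using R' v \<open>p = p'\<close> by (auto simp: run_window_uminus)
  have roots: "a < s" "s + p \<le> a + L" "a' < s" "s + p \<le> a' + L'"
    using s \<open>p = p'\<close> by (simp_all add: lyndon_roots_def)
  have "a \<le> a'" "a' + L' \<le> a + L"
    using periodic_window_within_run[OF R _ _ roots(1)[THEN less_imp_le] roots(2)] R'_w roots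
    by (auto simp: run_window_def)
  moreover have "a' \<le> a" "a + L \<le> a' + L'"
    using periodic_window_within_run[OF R'_w _ _ roots(3)[THEN less_imp_le] roots(4)] R roots
    by (auto simp: run_window_def)
  ultimately show ?thesis
    using \<open>p = p'\<close> by simp
qed

definition run_order :: "(nat \<Rightarrow> 'b::linordered_ab_group_add) \<Rightarrow> nat \<Rightarrow> nat \<Rightarrow> nat \<Rightarrow> nat \<Rightarrow> nat \<Rightarrow> 'b" where
  "run_order w n a L p = (if descends_at_end w n a L p then w else (\<lambda>q. - w q))"

lemma run_window_run_order:
  fixes w :: "nat \<Rightarrow> 'b::linordered_ab_group_add"
  assumes "run_window w n a L p"
  shows "run_window (run_order w n a L p) n a L p" "descends_at_end (run_order w n a L p) n a L p"
  using assms by (simp add: run_order_def run_window_uminus)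
    (use assms in \<open>auto simp: run_order_def run_window_def descends_at_end_def\<close>)

definition run_roots :: "(nat \<Rightarrow> 'b::linordered_ab_group_add) \<Rightarrow> nat \<Rightarrow> nat \<times> nat \<times> nat \<Rightarrow> nat set" where
  "run_roots w n = (\<lambda>(a, L, p). lyndon_roots (run_order w n a L p) a L p)"

lemma run_roots_subset:
  assumes "r \<in> run_windows w n"
  shows "run_roots w n r \<subseteq> {1..<n}"
proof -
  obtain a L p where r: "r = (a, L, p)"
    by (cases r)
  have "0 < p" "a + L \<le> n"
    using assms unfolding r by (simp_all add: run_windows_def run_window_def)
  then show ?thesis
    using lyndon_roots_subset[of p "run_order w n a L p" a L] unfolding r by (auto simp: run_roots_def)
qed

lemma run_roots_disjoint:
  assumes "r \<in> run_windows w n" "r' \<in> run_windows w n" "r \<noteq> r'"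
  shows "run_roots w n r \<inter> run_roots w n r' = {}"
proof -
  obtain a L p a' L' p' where r: "r = (a, L, p)" "r' = (a', L', p')"
    by (cases r, cases r')
  have R: "run_window w n a L p" "run_window w n a' L' p'"
    using assms unfolding r by (simp_all add: run_windows_def)
  have "run_order w n a' L' p' = run_order w n a L p \<or>
      run_order w n a' L' p' = (\<lambda>q. - run_order w n a L p q)"
    by (auto simp: run_order_def)
  then show ?thesis
    using lyndon_roots_disjoint[OF run_window_run_order(1)[OF R(1)] run_window_run_order(1)[OF R(2)] _
        run_window_run_order(2)[OF R(1)] run_window_run_order(2)[OF R(2)]] assms(3)
    unfolding r run_roots_def by blast
qed

lemma sum_exponents_run_windows_le:
  fixes w :: "nat \<Rightarrow> 'b::linordered_ab_group_add"
  shows "(\<Sum>(a, L, p)\<in>run_windows w n. real L / real p) \<le> 3 * real (n - 1)"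
proof -
  have "(\<Sum>(a, L, p)\<in>run_windows w n. real L / real p)
      \<le> (\<Sum>r\<in>run_windows w n. 3 * real (card (run_roots w n r)))"
  proof (rule sum_mono, clarify)
    fix a L p assume "(a, L, p) \<in> run_windows w n"
    then have "run_window (run_order w n a L p) n a L p"
      by (simp add: run_windows_def run_window_run_order)
    then show "real L / real p \<le> 3 * real (card (run_roots w n (a, L, p)))"
      unfolding run_roots_def run_window_def by (auto intro: exponent_le_three_card_lyndon_roots)
  qed
  also have "\<dots> = 3 * real (card (\<Union>r\<in>run_windows w n. run_roots w n r))"
  proof -
    have "finite (run_roots w n r)" if "r \<in> run_windows w n" for r
      using run_roots_subset[OF that] by (rule finite_subset) simp
    then have "card (\<Union>r\<in>run_windows w n. run_roots w n r) = (\<Sum>r\<in>run_windows w n. card (run_roots w n r))"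
      by (intro card_UN_disjoint finite_run_windows) (simp_all add: run_roots_disjoint)
    then show ?thesis
      by (simp add: sum_distrib_left)
  qed
  also have "\<dots> \<le> 3 * real (n - 1)"
  proof -
    have "(\<Union>r\<in>run_windows w n. run_roots w n r) \<subseteq> {1..<n}"
      using run_roots_subset by blast
    then have "card (\<Union>r\<in>run_windows w n. run_roots w n r) \<le> card {1..<n}"
      by (intro card_mono) auto
    then show ?thesis
      by simp
  qed
  finally show ?thesis .
qed

lemma nth_factor:
  assumes "1 \<le> i" "j \<le> length u" "k < j + 1 - i"
  shows "factor u i j ! k = u ! (i - 1 + k)"
  using assms by (simp add: factor_def)

lemma length_factor: "1 \<le> i \<Longrightarrow> j \<le> length u \<Longrightarrow> length (factor u i j) = j + 1 - i"
  by (simp add: factor_def)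

lemma is_period_factor_iff:
  assumes "1 \<le> i" "j \<le> length u"
  shows "is_period (factor u i j) k \<longleftrightarrow> 0 < k \<and> has_period_on ((!) u) (i - 1) (j + 1 - i) k"
proof -
  have "(\<forall>t. t + k < j + 1 - i \<longrightarrow> factor u i j ! t = factor u i j ! (t + k)) \<longleftrightarrow>
      has_period_on ((!) u) (i - 1) (j + 1 - i) k"
    unfolding has_period_on_def
  proof safe
    fix q assume "\<forall>t. t + k < j + 1 - i \<longrightarrow> factor u i j ! t = factor u i j ! (t + k)"
      and q: "i - 1 \<le> q" "q + k < i - 1 + (j + 1 - i)"
    then have "factor u i j ! (q - (i - 1)) = factor u i j ! (q - (i - 1) + k)"
      by simp
    then show "u ! q = u ! (q + k)"
      using assms q by (simp add: nth_factor)
  next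
    fix t assume "\<forall>q. i - 1 \<le> q \<and> q + k < i - 1 + (j + 1 - i) \<longrightarrow> u ! q = u ! (q + k)"
      and t: "t + k < j + 1 - i"
    then have "u ! (i - 1 + t) = u ! (i - 1 + t + k)"
      by simp
    then show "factor u i j ! t = factor u i j ! (t + k)"
      using assms t by (simp add: nth_factor add.assoc)
  qed
  then show ?thesis
    using assms by (simp add: is_period_def length_factor)
qed

lemma run_window_of_is_run:
  assumes "is_run u i j"
  shows "run_window ((!) u) (length u) (i - 1) (j + 1 - i) (period (factor u i j))"
proof -
  define p where "p = period (factor u i j)"
  have ij: "1 \<le> i" "i \<le> j" "j \<le> length u"
    using assms by (simp_all add: is_run_def)
  have "is_period (factor u i j) (j + 1 - i)"
    using ij by (simp add: is_period_def length_factor)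
  then have "is_period (factor u i j) p" "\<And>k. is_period (factor u i j) k \<Longrightarrow> p \<le> k"
    unfolding p_def period_def by (auto intro: LeastI Least_le)
  then have p: "0 < p" "has_period_on ((!) u) (i - 1) (j + 1 - i) p"
    "\<And>k. 0 < k \<Longrightarrow> k < p \<Longrightarrow> \<not> has_period_on ((!) u) (i - 1) (j + 1 - i) k"
    using ij by (auto simp: is_period_factor_iff dest: leD)
  have run: "2 * p \<le> j - i + 1" "i = 1 \<or> letter u (i - 1) \<noteq> letter u (i + p - 1)"
    "j = length u \<or> letter u (j - p + 1) \<noteq> letter u (j + 1)"
    using assms unfolding is_run_def p_def Let_def by auto
  have "i - 1 = 0 \<or> u ! (i - 1 - 1) \<noteq> u ! (i - 1 - 1 + p)"
    using run(2) ij p(1) by (auto simp: letter_def)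
  moreover have "i - 1 + (j + 1 - i) = length u \<or>
      u ! (i - 1 + (j + 1 - i) - p) \<noteq> u ! (i - 1 + (j + 1 - i))"
    using run(1,3) ij by (auto simp: letter_def)
  ultimately show ?thesis
    unfolding run_window_def p_def[symmetric] using p run(1) ij by auto
qed

theorem theorem2:
  fixes u :: "'a list" and n :: nat
  assumes "finite (UNIV :: 'a set)"
    and "n > 0" and "length u = n"
  shows "(\<Sum>r\<in>runs u. run_exponent u r) < 4.1 * real n"
proof -
  obtain f :: "'a \<Rightarrow> nat" where "inj f"
    using finite_imp_inj_to_nat_seg[OF assms(1)] by blast
  define w where "w = int \<circ> f \<circ> (!) u"
  define g where "g = (\<lambda>(i, j). (i - 1, j + 1 - i, period (factor u i j)))"
  have "inj (int \<circ> f)"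
    using \<open>inj f\<close> by (simp add: inj_compose)
  then have "run_window w n a L p \<longleftrightarrow> run_window ((!) u) n a L p" for a L p
    unfolding w_def by (rule run_window_comp_inj)
  then have g_runs: "g ` runs u \<subseteq> run_windows w n"
    using run_window_of_is_run assms(3) by (auto simp: g_def runs_def run_windows_def)
  have "inj_on g (runs u)"
    by (auto simp: inj_on_def g_def runs_def is_run_def)
  then have "(\<Sum>r\<in>runs u. run_exponent u r) = (\<Sum>(a, L, p)\<in>g ` runs u. real L / real p)"
    by (rule sum.reindex_cong[OF _ refl, symmetric])
      (auto simp: g_def run_exponent_def runs_def is_run_def)
  also have "\<dots> \<le> (\<Sum>(a, L, p)\<in>run_windows w n. real L / real p)"
    using g_runs finite_run_windows by (intro sum_mono2) auto
  also have "\<dots> \<le> 3 * real (n - 1)"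
    by (rule sum_exponents_run_windows_le)
  also have "\<dots> < 4.1 * real n"
    using assms(2) by simp
  finally show ?thesis .
qed

end
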